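(* Let $\alpha,\beta,\gamma\in\mathbb{C}$ with $\mathrm{Re}\,\beta>-1$, such that all gamma functions and hypergeometric functions below are well-defined, and let $\rho\in\mathbb{R}\setminus\{0\}$. For $\delta\in\mathbb{C}$ and $z\neq0$ let $$f(\alpha,\beta,\gamma,\delta;z)=\sum_{\nu=0}^{\infty}\frac{z^{-\nu}\Gamma(\alpha+\gamma+\nu)}{\nu!\,\Gamma(\beta+\nu)}\,E\left(\begin{matrix}\alpha+1,&\beta+\nu\\ \delta,&\beta+1+\nu\end{matrix};z\right).$$ Then $$\int_0^{\rho}t^{\beta}E(\alpha;\beta;i/t)E(\alpha+\gamma;\beta;-i/t)\,dt=\rho^{\beta+1}E(\alpha;\beta;i/\rho)E\left(\begin{matrix}\alpha+\gamma,&\beta+1\\ \beta,&\beta+2\end{matrix};-\frac{i}{\rho}\right)-i\rho^{\beta+2}\beta f\left(\alpha,\beta+2,\gamma,\beta+1;\frac{i}{\rho}\right)-\rho^{\beta+3}f\left(\alpha,\beta+3,\gamma+1,\beta+1;\frac{i}{\rho}\right),$$ and equivalently $$\int_0^{\rho}t^{\beta}E(\alpha;\beta;i/t)E(\alpha+\gamma;\beta;-i/t)\,dt=\rho^{\beta+1}\left(\beta f\left(\alpha-1,\beta+1,\gamma+1,\beta;\frac{i}{\rho}\right)-i\rho f\left(\alpha-1,\beta+2,\gamma+2,\beta;\frac{i}{\rho}\right)\right).$$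
   Context: For complex parameters $a_1,\dots,a_p$, $b_1,\dots,b_q$ with $p\le q$ and $z\in\mathbb{C}\setminus\{0\}$, the MacRobert $E$-function is $$E\left(\begin{matrix}a_1,\dots,a_p\\ b_1,\dots,b_q\end{matrix};z\right)=\frac{\prod_{j=1}^p\Gamma(a_j)}{\prod_{j=1}^q\Gamma(b_j)}\,{}_pF_q\left(\begin{matrix}a_1,\dots,a_p\\ b_1,\dots,b_q\end{matrix};-\frac1z\right),$$ where ${}_pF_q$ is the generalized hypergeometric function. In particular $E(a;b;z)=\frac{\Gamma(a)}{\Gamma(b)}\,{}_1F_1(a;b;-1/z)$. *)

theory Defs
  imports "HOL-Analysis.Analysis"
begin

definition hyperpFq :: "complex list \<Rightarrow> complex list \<Rightarrow> complex \<Rightarrow> complex" where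
  "hyperpFq as bs z =
     (\<Sum>n. (\<Prod>a\<leftarrow>as. pochhammer a n) / (\<Prod>b\<leftarrow>bs. pochhammer b n) * z ^ n / fact n)"

text \<open>MacRobert E-function (for p \<le> q).\<close>
definition MacRobertE :: "complex list \<Rightarrow> complex list \<Rightarrow> complex \<Rightarrow> complex" where
  "MacRobertE as bs z =
     (\<Prod>a\<leftarrow>as. Gamma a) / (\<Prod>b\<leftarrow>bs. Gamma b) * hyperpFq as bs (- 1 / z)"

definition fE :: "complex \<Rightarrow> complex \<Rightarrow> complex \<Rightarrow> complex \<Rightarrow> complex \<Rightarrow> complex" where
  "fE a b c d z =
     (\<Sum>\<nu>. (1 / z) ^ \<nu> * Gamma (a + c + of_nat \<nu>) / (fact \<nu> * Gamma (b + of_nat \<nu>))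
           * MacRobertE [a + 1, b + of_nat \<nu>] [d, b + 1 + of_nat \<nu>] z)"

definition has_ointegral :: "(real \<Rightarrow> complex) \<Rightarrow> complex \<Rightarrow> real \<Rightarrow> real \<Rightarrow> bool" where
  "has_ointegral f I a b =
     (if a \<le> b then (f has_integral I) {a..b} else (f has_integral (- I)) {b..a})"

end

theory Submission
  imports Defs
begin

(* E(a;b;w) = Gamma(a)/Gamma(b) 1F1(a;b;-1/w) is the entire series
   Phi(z) = sum_n Gamma(a+n)/Gamma(b+n) (u z)^n/n! evaluated at u z = -1/w, so the integrand is
   t^beta Phi_(alpha,beta,i)(t) Phi_(alpha+gamma,beta,-i)(t).  The Euler operator theta + s
   (theta = z d/dz) multiplies the n-th coefficient by s + n; its inverse turns sum_n c_n t^n into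
   sum_n c_n t^n/(s+n), and t^s times that is a primitive of t^(s-1) sum_n c_n t^n.  After a
   Cauchy-product rearrangement of the double series, rho^b f(a,b,c,d;i/rho) is exactly such a
   primitive of a product of two Phi's.  Both formulas then follow from the contiguous relation
   (theta + b) Phi_(a,b+1) = Phi_(a,b) together with Phi_(a,b)' = u Phi_(a+1,b+1): the second one
   integrates the two resulting terms directly, the first integrates by parts, differentiating
   Phi_(alpha,beta,i). *)

lemma Re_pos_notin_nonpos_Ints: "Re z > 0 \<Longrightarrow> z \<notin> \<int>\<^sub>\<le>\<^sub>0"
  by (auto elim!: nonpos_Ints_cases')

lemma add_of_nat_notin_nonpos_Ints:
  fixes a :: "'a :: ring_1"
  assumes "a \<notin> \<int>\<^sub>\<le>\<^sub>0"
  shows "a + of_nat n \<notin> \<int>\<^sub>\<le>\<^sub>0"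
proof
  assume "a + of_nat n \<in> \<int>\<^sub>\<le>\<^sub>0"
  then obtain m where "a + of_nat n = - of_nat m"
    by (auto elim!: nonpos_Ints_cases')
  then have "a = - of_nat (m + n)"
    by (simp add: algebra_simps)
  then have "a \<in> \<int>\<^sub>\<le>\<^sub>0"
    by (simp only: minus_of_nat_in_nonpos_Ints)
  with assms show False
    by contradiction
qed

lemma eventually_add_of_nat_notin_nonpos_Ints:
  "eventually (\<lambda>n. (a :: complex) + of_nat n \<notin> \<int>\<^sub>\<le>\<^sub>0) sequentially"
proof -
  obtain N :: nat where "norm a < real N"
    using reals_Archimedean2 by blast
  have "a + of_nat n \<notin> \<int>\<^sub>\<le>\<^sub>0" if "n \<ge> N" for n
  proof (rule Re_pos_notin_nonpos_Ints)
    have "- Re a \<le> norm a" "real N \<le> real n"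
      using abs_Re_le_cmod[of a] that by auto
    with \<open>norm a < real N\<close> show "Re (a + of_nat n) > 0"
      by simp
  qed
  then show ?thesis
    unfolding eventually_sequentially by blast
qed

lemma conv_radius_inftyI_ratio:
  fixes c :: "nat \<Rightarrow> 'a :: {banach, real_normed_field}"
  assumes rec: "eventually (\<lambda>n. c (Suc n) = r n * c n) sequentially"
    and r: "r \<longlonglongrightarrow> 0"
  shows "conv_radius c = \<infinity>"
proof (rule conv_radius_inftyI'')
  fix z :: 'a
  have "(\<lambda>n. z * r n) \<longlonglongrightarrow> 0"
    using tendsto_mult_right_zero[OF r] .
  then have "eventually (\<lambda>n. norm (z * r n) < 1/2) sequentially"
    by (rule order_tendstoD(2)[OF tendsto_norm_zero]) simp
  with rec have "eventually (\<lambda>n. c (Suc n) = r n * c n \<and> norm (z * r n) < 1/2) sequentially"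
    by (rule eventually_conj)
  then obtain N where N: "\<And>n. n \<ge> N \<Longrightarrow> c (Suc n) = r n * c n \<and> norm (z * r n) < 1/2"
    by (auto simp: eventually_sequentially)
  show "summable (\<lambda>n. c n * z ^ n)"
  proof (rule summable_ratio_test[where c = "1/2" and N = N])
    fix n assume "n \<ge> N"
    then have "norm (c (Suc n) * z ^ Suc n) = norm (z * r n) * norm (c n * z ^ n)"
      using N by (simp add: norm_mult)
    also have "\<dots> \<le> 1/2 * norm (c n * z ^ n)"
      using N[OF \<open>n \<ge> N\<close>] by (intro mult_right_mono) auto
    finally show "norm (c (Suc n) * z ^ Suc n) \<le> 1/2 * norm (c n * z ^ n)" .
  qed simp
qed

lemma summable_on_product_of_nonneg_summable:
  fixes a b :: "nat \<Rightarrow> real"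
  assumes "summable a" "summable b" "\<And>i. a i \<ge> 0" "\<And>j. b j \<ge> 0"
  shows "(\<lambda>(i, j). a i * b j) summable_on UNIV"
proof -
  have a: "(a has_sum (\<Sum>i. a i)) UNIV" and b: "(b has_sum (\<Sum>j. b j)) UNIV"
    using assms by (auto intro!: sums_nonneg_imp_has_sum summable_sums)
  from b have rows: "((\<lambda>j. a i * b j) has_sum a i * (\<Sum>j. b j)) UNIV" for i
    by (intro has_sum_cmult_right) simp
  have "(\<lambda>i. a i * (\<Sum>j. b j)) summable_on UNIV"
    using has_sum_cmult_left[OF a] by (rule has_sum_imp_summable)
  with rows have "(\<lambda>(i, j). a i * b j) summable_on Sigma UNIV (\<lambda>_. UNIV)"
    using assms(3,4) by (intro summable_on_SigmaI) auto
  then show ?thesis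
    by simp
qed

lemma suminf_suminf_eq_suminf_diagonal:
  fixes x :: "nat \<Rightarrow> nat \<Rightarrow> 'a :: banach"
  assumes bound: "\<And>i j. norm (x i j) \<le> a i * b j"
    and a: "summable a" "\<And>i. a i \<ge> 0" and b: "summable b" "\<And>j. b j \<ge> 0"
  shows "(\<Sum>i. \<Sum>j. x i j) = (\<Sum>n. \<Sum>i\<le>n. x i (n - i))"
proof -
  have "(\<lambda>(i, j). x i j) abs_summable_on UNIV"
    by (rule Infinite_Sum.abs_summable_on_comparison_test'[OF summable_on_product_of_nonneg_summable[OF a(1) b(1) a(2) b(2)]])
      (auto simp: bound)
  then have summable: "(\<lambda>(i, j). x i j) summable_on UNIV"
    by (rule abs_summable_summable)
  define T where "T = infsum (\<lambda>(i, j). x i j) (UNIV :: (nat \<times> nat) set)"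
  from has_sum_infsum[OF summable] have T: "((\<lambda>(i, j). x i j) has_sum T) (Sigma UNIV (\<lambda>_. UNIV))"
    by (simp add: T_def)
  have "summable (\<lambda>j. norm (x i j))" for i
    by (rule summable_comparison_test'[OF summable_mult[OF b(1), of "a i"]]) (simp add: bound)
  then have rows: "((\<lambda>j. x i j) has_sum (\<Sum>j. x i j)) UNIV" for i
    by (intro norm_summable_imp_has_sum summable_sums[OF summable_norm_cancel])
  have row_sums: "((\<lambda>i. \<Sum>j. x i j) has_sum T) UNIV"
    by (rule has_sum_SigmaD[OF T]) (simp add: rows)
  have "((\<lambda>(n, i). x i (n - i)) has_sum T) (Sigma UNIV (\<lambda>n. {..n}))
      \<longleftrightarrow> ((\<lambda>(i, j). x i j) has_sum T) (Sigma UNIV (\<lambda>_. UNIV))"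
    by (rule has_sum_reindex_bij_witness[where i = "\<lambda>(i, j). (i + j, i)" and j = "\<lambda>(n, i). (i, n - i)"])
      auto
  with T have "((\<lambda>(n, i). x i (n - i)) has_sum T) (Sigma UNIV (\<lambda>n. {..n}))"
    by blast
  then have diagonal_sums: "((\<lambda>n. \<Sum>i\<le>n. x i (n - i)) has_sum T) UNIV"
    by (rule has_sum_SigmaD) (simp add: has_sum_finite)
  show ?thesis
    using row_sums[THEN has_sum_imp_sums] diagonal_sums[THEN has_sum_imp_sums] by (simp add: sums_iff)
qed

lemma minus_one_powr_diff_one: "(-1 :: complex) powr (s - 1) = - ((-1) powr s)"
  by (simp add: powr_def exp_diff algebra_simps)

lemma has_vector_derivative_of_real_powr:
  assumes "t \<noteq> 0"
  shows "((\<lambda>t. complex_of_real t powr s) has_vector_derivative s * complex_of_real t powr (s - 1)) (at t)"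
proof (cases "t > 0")
  case True
  then have "((\<lambda>z. z powr s) has_field_derivative s * complex_of_real t powr (s - 1)) (at (complex_of_real t))"
    by (intro has_field_derivative_powr) simp
  then show ?thesis
    by (rule has_vector_derivative_real_field)
next
  case False
  with assms have "t < 0"
    by simp
  \<comment> \<open>the negative axis is the branch cut of \<open>powr\<close>, so differentiate via \<open>- t\<close> instead\<close>
  have neg: "complex_of_real x powr w = (-1) powr w * (- complex_of_real x) powr w" if "x < 0" for x w
    using powr_neg_real_complex[of "- x" w] that by simp
  have "((\<lambda>z. z powr s) has_field_derivative s * (- complex_of_real t) powr (s - 1))
      (at (- complex_of_real t))"
    using \<open>t < 0\<close> by (intro has_field_derivative_powr) (simp add: complex_nonpos_Reals_iff)
  from has_vector_derivative_real_field[OF DERIV_chain2[OF this DERIV_minus[OF DERIV_ident]]]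
  have "((\<lambda>x. (-1) powr s * (- complex_of_real x) powr s)
      has_vector_derivative (-1) powr s * (s * (- complex_of_real t) powr (s - 1) * -1)) (at t)"
    by (rule has_vector_derivative_mult_right)
  also have "(-1) powr s * (s * (- complex_of_real t) powr (s - 1) * -1) = s * complex_of_real t powr (s - 1)"
    unfolding neg[OF \<open>t < 0\<close>, of "s - 1"] minus_one_powr_diff_one
    by (simp only: mult_ac mult_minus_left mult_minus_right mult_1_right mult_1_left)
  finally show ?thesis
    by (rule has_vector_derivative_transform_within_open[where S = "{..<0}"])
      (use \<open>t < 0\<close> neg in auto)
qed

lemma powr_add_one: "(z :: complex) powr (s + 1) = z powr s * z"
  by (simp add: powr_add)

lemma has_ointegral_fundamental:
  fixes F f :: "real \<Rightarrow> complex"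
  assumes cont: "isCont F c"
    and deriv: "\<And>t. t \<noteq> c \<Longrightarrow> (F has_vector_derivative f t) (at t)"
  shows "has_ointegral f (F b - F a) a b"
proof -
  have "isCont F t" for t
    using cont deriv[THEN has_vector_derivative_continuous] by (cases "t = c") auto
  then have "continuous_on S F" for S
    by (simp add: continuous_at_imp_continuous_on)
  then have "(f has_integral (F v - F u)) {u..v}" if "u \<le> v" for u v
    using that deriv by (intro fundamental_theorem_of_calculus_interior_strong[where S = "{c}"]) auto
  then show ?thesis
    unfolding has_ointegral_def by (simp add: minus_diff_eq)
qed

lemma has_ointegral_add:
  "has_ointegral f I a b \<Longrightarrow> has_ointegral g J a b \<Longrightarrow> has_ointegral (\<lambda>t. f t + g t) (I + J) a b"
  unfolding has_ointegral_def by (cases "a \<le> b") (auto dest: has_integral_add[of f _ _ g])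

lemma has_ointegral_diff:
  "has_ointegral f I a b \<Longrightarrow> has_ointegral g J a b \<Longrightarrow> has_ointegral (\<lambda>t. f t - g t) (I - J) a b"
  unfolding has_ointegral_def by (cases "a \<le> b") (auto dest: has_integral_diff[of f _ _ g])

lemma has_ointegral_mult_right:
  "has_ointegral f I a b \<Longrightarrow> has_ointegral (\<lambda>t. c * f t) (c * I) a b"
  unfolding has_ointegral_def by (cases "a \<le> b") (auto dest: has_integral_mult_right[where c = c])

lemma has_ointegral_by_parts:
  fixes U V u v :: "real \<Rightarrow> complex"
  assumes "isCont U c" "isCont V c"
    and "\<And>t. t \<noteq> c \<Longrightarrow> (U has_vector_derivative u t) (at t)"
    and "\<And>t. t \<noteq> c \<Longrightarrow> (V has_vector_derivative v t) (at t)"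
    and "has_ointegral (\<lambda>t. u t * V t) I a b"
  shows "has_ointegral (\<lambda>t. U t * v t) (U b * V b - U a * V a - I) a b"
proof -
  have "has_ointegral (\<lambda>t. u t * V t + U t * v t) (U b * V b - U a * V a) a b"
    using assms(1-4)
    by (intro has_ointegral_fundamental[where F = "\<lambda>t. U t * V t" and c = c] continuous_intros)
      (auto intro!: derivative_eq_intros simp: algebra_simps)
  from has_ointegral_diff[OF this assms(5)] show ?thesis
    by simp
qed

definition fps_euler :: "'a :: comm_semiring_1 \<Rightarrow> 'a fps \<Rightarrow> 'a fps" where
  "fps_euler s f = Abs_fps (\<lambda>n. (s + of_nat n) * fps_nth f n)"

definition fps_euler_inv :: "'a :: field \<Rightarrow> 'a fps \<Rightarrow> 'a fps" where
  "fps_euler_inv s f = Abs_fps (\<lambda>n. fps_nth f n / (s + of_nat n))"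

lemma fps_euler_conv_deriv:
  "fps_euler s f = fps_const s * f + fps_X * fps_deriv f"
  by (rule fps_ext) (auto simp: fps_euler_def algebra_simps elim: nat.exhaust)

lemma fps_euler_commute: "fps_euler s (fps_euler r f) = fps_euler r (fps_euler s f)"
  by (simp add: fps_euler_def fps_eq_iff mult.left_commute)

lemma
  assumes "\<And>n. s + of_nat n \<noteq> (0 :: 'a :: field)"
  shows fps_euler_inv_euler: "fps_euler_inv s (fps_euler s f) = f"
    and fps_euler_euler_inv: "fps_euler s (fps_euler_inv s f) = f"
  using assms by (simp_all add: fps_euler_def fps_euler_inv_def fps_eq_iff)

lemma norm_add_of_nat_ge_Re: "norm (s + of_nat n) \<ge> Re s"
  using complex_Re_le_cmod[of "s + of_nat n"] by simp

lemma fps_conv_radius_euler_inv: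
  assumes "Re s > 0"
  shows "fps_conv_radius (fps_euler_inv s f) \<ge> fps_conv_radius f"
  unfolding fps_conv_radius_def
proof (rule conv_radius_geI_ex')
  fix r :: real
  assume "0 < r" "ereal r < conv_radius (fps_nth f)"
  then have summable: "summable (\<lambda>n. norm (fps_nth f n * of_real r ^ n) / Re s)"
    by (intro summable_divide abs_summable_in_conv_radius) simp
  have bound: "norm (fps_nth (fps_euler_inv s f) n * of_real r ^ n) \<le> norm (fps_nth f n * of_real r ^ n) / Re s"
    for n
  proof -
    have "norm (fps_nth (fps_euler_inv s f) n * of_real r ^ n)
        = norm (fps_nth f n * of_real r ^ n) / norm (s + of_nat n)"
      by (simp add: fps_euler_inv_def norm_mult norm_divide)
    also have "\<dots> \<le> norm (fps_nth f n * of_real r ^ n) / Re s"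
      using norm_add_of_nat_ge_Re[of s n] assms
      by (intro divide_left_mono mult_pos_pos norm_ge_zero) linarith+
    finally show ?thesis .
  qed
  show "summable (\<lambda>n. fps_nth (fps_euler_inv s f) n * of_real r ^ n)"
    by (rule summable_norm_cancel, rule summable_comparison_test'[OF summable]) (simp add: bound)
qed

lemma fps_conv_radius_euler_inv_eq_inf:
  "Re s > 0 \<Longrightarrow> fps_conv_radius f = \<infinity> \<Longrightarrow> fps_conv_radius (fps_euler_inv s f) = \<infinity>"
  using fps_conv_radius_euler_inv[of s f] by simp

lemma eval_fps_euler:
  fixes f :: "complex fps"
  assumes "fps_conv_radius f = \<infinity>"
  shows "eval_fps (fps_euler s f) z = s * eval_fps f z + z * eval_fps (fps_deriv f) z"
proof -
  have "fps_conv_radius (fps_deriv f) = \<infinity>"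
    using fps_conv_radius_deriv[of f] assms by simp
  then show ?thesis
    using assms fps_conv_radius_mult[of "fps_const s" f] fps_conv_radius_mult[of fps_X "fps_deriv f"]
    by (simp add: fps_euler_conv_deriv eval_fps_add eval_fps_mult)
qed

definition kummer_fps :: "complex \<Rightarrow> complex \<Rightarrow> complex \<Rightarrow> complex fps" where
  "kummer_fps a b u = Abs_fps (\<lambda>n. Gamma (a + of_nat n) / Gamma (b + of_nat n) * u ^ n / fact n)"

lemma fps_deriv_kummer_fps:
  "fps_deriv (kummer_fps a b u) = fps_const u * kummer_fps (a + 1) (b + 1) u"
proof (rule fps_ext)
  fix n
  have shift: "a + of_nat (Suc n) = a + 1 + of_nat n" "b + of_nat (Suc n) = b + 1 + of_nat n"
    by simp_all
  have "(of_nat (Suc n) :: complex) \<noteq> 0"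
    by (rule of_nat_neq_0)
  then show "fps_nth (fps_deriv (kummer_fps a b u)) n = fps_nth (fps_const u * kummer_fps (a + 1) (b + 1) u) n"
    unfolding fps_deriv_nth kummer_fps_def fps_nth_Abs_fps Suc_eq_plus1[symmetric] shift fact_Suc
    by (simp add: field_simps del: of_nat_Suc)
qed

lemma fps_euler_kummer_fps:
  assumes "b \<notin> \<int>\<^sub>\<le>\<^sub>0"
  shows "fps_euler b (kummer_fps a (b + 1) u) = kummer_fps a b u"
proof (rule fps_ext)
  fix n
  have bn: "b + of_nat n \<notin> \<int>\<^sub>\<le>\<^sub>0"
    using add_of_nat_notin_nonpos_Ints[OF assms] .
  then have "Gamma (b + 1 + of_nat n) = (b + of_nat n) * Gamma (b + of_nat n)"
    using Gamma_plus1[OF bn] by (simp add: add_ac)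
  moreover have "b + of_nat n \<noteq> 0"
    using bn by auto
  ultimately show "fps_nth (fps_euler b (kummer_fps a (b + 1) u)) n = fps_nth (kummer_fps a b u) n"
    by (simp add: fps_euler_def kummer_fps_def)
qed

lemma fps_euler_inv_kummer_fps:
  assumes "b \<notin> \<int>\<^sub>\<le>\<^sub>0"
  shows "fps_euler_inv (b + 1) (kummer_fps a b u) = fps_euler b (kummer_fps a (b + 2) u)"
proof -
  have b1: "b + 1 \<notin> \<int>\<^sub>\<le>\<^sub>0"
    using add_of_nat_notin_nonpos_Ints[OF assms, of 1] by simp
  then have "b + 1 + of_nat n \<noteq> 0" for n
    using add_of_nat_notin_nonpos_Ints[OF b1, of n] by auto
  moreover have "kummer_fps a b u = fps_euler (b + 1) (fps_euler b (kummer_fps a (b + 2) u))"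
    using fps_euler_kummer_fps[OF b1, of a u] fps_euler_kummer_fps[OF assms, of a u]
    by (simp add: fps_euler_commute add.assoc)
  ultimately show ?thesis
    by (simp add: fps_euler_inv_euler)
qed

lemma kummer_fps_ratio_tendsto_0:
  fixes a b u :: complex
  shows "(\<lambda>n. u * (a + of_nat n) / ((b + of_nat n) * of_nat (Suc n))) \<longlonglongrightarrow> 0"
proof (rule Lim_transform_eventually)
  have "(\<lambda>n. u * (a / of_nat n + 1) / (b / of_nat n + 1) * (1 / of_nat (Suc n)))
      \<longlonglongrightarrow> u * (0 + 1) / (0 + 1) * 0"
    by (intro tendsto_intros LIMSEQ_Suc[OF lim_1_over_n]) simp
  then show "(\<lambda>n. u * (a / of_nat n + 1) / (b / of_nat n + 1) * (1 / of_nat (Suc n))) \<longlonglongrightarrow> 0"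
    by simp
  show "eventually (\<lambda>n. u * (a / of_nat n + 1) / (b / of_nat n + 1) * (1 / of_nat (Suc n))
      = u * (a + of_nat n) / ((b + of_nat n) * of_nat (Suc n))) sequentially"
    using eventually_gt_at_top[of 0] eventually_add_of_nat_notin_nonpos_Ints[of b]
  proof eventually_elim
    case (elim n)
    then have "b + of_nat n \<noteq> 0" "(of_nat n :: complex) \<noteq> 0"
      by auto
    moreover have "x / of_nat n + 1 = (x + of_nat n) / of_nat n" for x :: complex
      using elim by (simp add: field_simps)
    ultimately show ?case
      by simp
  qed
qed

lemma fps_conv_radius_kummer_fps: "fps_conv_radius (kummer_fps a b u) = \<infinity>"
  unfolding fps_conv_radius_def
proof (rule conv_radius_inftyI_ratio[OF _ kummer_fps_ratio_tendsto_0])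
  show "eventually (\<lambda>n. fps_nth (kummer_fps a b u) (Suc n)
      = u * (a + of_nat n) / ((b + of_nat n) * of_nat (Suc n)) * fps_nth (kummer_fps a b u) n) sequentially"
    using eventually_add_of_nat_notin_nonpos_Ints[of a] eventually_add_of_nat_notin_nonpos_Ints[of b]
  proof eventually_elim
    case (elim n)
    have "Gamma (a + of_nat (Suc n)) = (a + of_nat n) * Gamma (a + of_nat n)"
      "Gamma (b + of_nat (Suc n)) = (b + of_nat n) * Gamma (b + of_nat n)"
      using Gamma_plus1[OF elim(1)] Gamma_plus1[OF elim(2)] by (simp_all add: add_ac)
    then have "fps_nth (kummer_fps a b u) (Suc n) = ((a + of_nat n) * Gamma (a + of_nat n))
        / ((b + of_nat n) * Gamma (b + of_nat n)) * (u * u ^ n) / (of_nat (Suc n) * fact n)"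
      unfolding kummer_fps_def fps_nth_Abs_fps fact_Suc power_Suc by (simp only: of_nat_mult)
    also have "\<dots> = u * (a + of_nat n) / ((b + of_nat n) * of_nat (Suc n))
        * (Gamma (a + of_nat n) / Gamma (b + of_nat n) * u ^ n / fact n)"
      by (simp add: divide_inverse ac_simps)
    finally show ?case
      by (simp only: kummer_fps_def fps_nth_Abs_fps)
  qed
qed

lemma eval_fps_euler_kummer_fps:
  "eval_fps (fps_euler s (kummer_fps a b u)) z
    = s * eval_fps (kummer_fps a b u) z + u * z * eval_fps (kummer_fps (a + 1) (b + 1) u) z"
  by (simp add: eval_fps_euler fps_conv_radius_kummer_fps fps_deriv_kummer_fps eval_fps_mult)

lemma eval_kummer_fps_contiguous:
  assumes "b \<notin> \<int>\<^sub>\<le>\<^sub>0"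
  shows "eval_fps (kummer_fps a b u) z
    = b * eval_fps (kummer_fps a (b + 1) u) z + u * z * eval_fps (kummer_fps (a + 1) (b + 2) u) z"
  using eval_fps_euler_kummer_fps[of b a "b + 1" u z] by (simp add: fps_euler_kummer_fps[OF assms] add.assoc)

lemma eval_fps_euler_inv_kummer_fps:
  assumes "b \<notin> \<int>\<^sub>\<le>\<^sub>0"
  shows "eval_fps (fps_euler_inv (b + 1) (kummer_fps a b u)) z
    = b * eval_fps (kummer_fps a (b + 2) u) z + u * z * eval_fps (kummer_fps (a + 1) (b + 3) u) z"
  using eval_fps_euler_kummer_fps[of b a "b + 2" u z] by (simp add: fps_euler_inv_kummer_fps[OF assms] add.assoc)

lemma reciprocal_i_divide:
  fixes z :: complex
  shows "\<i> * z = -1 / (\<i> / z)" "- \<i> * z = -1 / (- \<i> / z)" "1 / (\<i> / z) = - \<i> * z"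
  by (cases "z = 0"; simp add: field_simps)+

lemma MacRobertE_eq_eval_kummer_fps:
  assumes a: "a \<notin> \<int>\<^sub>\<le>\<^sub>0" and b: "b \<notin> \<int>\<^sub>\<le>\<^sub>0" and w: "u * z = -1 / w"
  shows "MacRobertE [a] [b] w = eval_fps (kummer_fps a b u) z"
proof -
  have "(\<lambda>n. fps_nth (kummer_fps a b u) n * z ^ n) sums eval_fps (kummer_fps a b u) z"
    by (rule sums_eval_fps) (simp add: fps_conv_radius_kummer_fps)
  then have "(\<lambda>n. Gamma b / Gamma a * (fps_nth (kummer_fps a b u) n * z ^ n))
      sums (Gamma b / Gamma a * eval_fps (kummer_fps a b u) z)"
    by (rule sums_mult)
  moreover have "Gamma b / Gamma a * (fps_nth (kummer_fps a b u) n * z ^ n)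
      = pochhammer a n / pochhammer b n * (u * z) ^ n / fact n" for n
    using Gamma_nonzero[OF a] Gamma_nonzero[OF b]
    by (simp add: kummer_fps_def pochhammer_Gamma[OF a] pochhammer_Gamma[OF b])
      (simp add: power_mult_distrib field_simps)
  ultimately have "hyperpFq [a] [b] (u * z) = Gamma b / Gamma a * eval_fps (kummer_fps a b u) z"
    by (simp add: hyperpFq_def sums_iff)
  then show ?thesis
    using Gamma_nonzero[OF a] Gamma_nonzero[OF b] unfolding MacRobertE_def w[symmetric] by simp
qed

lemma MacRobertE_product_eq_eval_fps:
  assumes "\<alpha> \<notin> \<int>\<^sub>\<le>\<^sub>0" "\<beta> \<notin> \<int>\<^sub>\<le>\<^sub>0" "\<alpha> + \<gamma> \<notin> \<int>\<^sub>\<le>\<^sub>0"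
  shows "MacRobertE [\<alpha>] [\<beta>] (\<i> / z) * MacRobertE [\<alpha> + \<gamma>] [\<beta>] (- \<i> / z)
    = eval_fps (kummer_fps \<alpha> \<beta> \<i>) z * eval_fps (kummer_fps (\<alpha> + \<gamma>) \<beta> (- \<i>)) z"
  using MacRobertE_eq_eval_kummer_fps[OF assms(1,2) reciprocal_i_divide(1)]
    MacRobertE_eq_eval_kummer_fps[OF assms(3,2) reciprocal_i_divide(2)]
  by simp

lemma MacRobertE_eq_eval_fps_euler_inv_kummer_fps:
  assumes a: "a \<notin> \<int>\<^sub>\<le>\<^sub>0" and d: "d \<notin> \<int>\<^sub>\<le>\<^sub>0" and s: "Re s > 0" and w: "u * z = -1 / w"
  shows "MacRobertE [a, s] [d, s + 1] w = eval_fps (fps_euler_inv s (kummer_fps a d u)) z"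
proof -
  define C where "C = Gamma d * s / Gamma a"
  have s0: "s \<notin> \<int>\<^sub>\<le>\<^sub>0" "s \<noteq> 0"
    using Re_pos_notin_nonpos_Ints[OF s] by auto
  have s1: "s + 1 \<notin> \<int>\<^sub>\<le>\<^sub>0"
    using add_of_nat_notin_nonpos_Ints[OF s0(1), of 1] by simp
  have "fps_conv_radius (fps_euler_inv s (kummer_fps a d u)) = \<infinity>"
    using fps_conv_radius_euler_inv[OF s, of "kummer_fps a d u"] by (simp add: fps_conv_radius_kummer_fps)
  then have "(\<lambda>n. C * (fps_nth (fps_euler_inv s (kummer_fps a d u)) n * z ^ n))
      sums (C * eval_fps (fps_euler_inv s (kummer_fps a d u)) z)"
    by (intro sums_mult sums_eval_fps) simp
  moreover have "C * (fps_nth (fps_euler_inv s (kummer_fps a d u)) n * z ^ n)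
      = pochhammer a n * pochhammer s n / (pochhammer d n * pochhammer (s + 1) n) * (u * z) ^ n / fact n"
    for n
  proof -
    have sn: "s + of_nat n \<notin> \<int>\<^sub>\<le>\<^sub>0"
      using add_of_nat_notin_nonpos_Ints[OF s0(1)] .
    have "Gamma (s + 1 + of_nat n) = (s + of_nat n) * Gamma (s + of_nat n)"
      using Gamma_plus1[OF sn] by (simp add: add_ac)
    moreover have "Gamma (s + 1) = s * Gamma s"
      using Gamma_plus1[OF s0(1)] .
    moreover have "s + of_nat n \<noteq> 0"
      using sn by auto
    ultimately show ?thesis
      using Gamma_nonzero[OF a] Gamma_nonzero[OF d] Gamma_nonzero[OF s0(1)] Gamma_nonzero[OF sn] s0(2)
      by (simp add: C_def fps_euler_inv_def kummer_fps_def pochhammer_Gamma[OF a] pochhammer_Gamma[OF d]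
          pochhammer_Gamma[OF s0(1)] pochhammer_Gamma[OF s1])
        (simp add: power_mult_distrib field_simps)
  qed
  ultimately have "hyperpFq [a, s] [d, s + 1] (u * z) = C * eval_fps (fps_euler_inv s (kummer_fps a d u)) z"
    by (simp add: hyperpFq_def sums_iff)
  then show ?thesis
    using Gamma_nonzero[OF a] Gamma_nonzero[OF d] Gamma_nonzero[OF s0(1)] s0(2)
    unfolding MacRobertE_def w[symmetric] by (simp add: C_def Gamma_plus1[OF s0(1)])
qed

lemma fE_summand_eq_suminf:
  fixes a b c d z :: complex
  assumes b: "Re b > 0" and a1: "a + 1 \<notin> \<int>\<^sub>\<le>\<^sub>0" and d: "d \<notin> \<int>\<^sub>\<le>\<^sub>0"
  defines "p \<equiv> kummer_fps (a + c) b (- \<i>)" and "q \<equiv> kummer_fps (a + 1) d \<i>"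
  shows "(1 / (\<i> / z)) ^ \<nu> * Gamma (a + c + of_nat \<nu>) / (fact \<nu> * Gamma (b + of_nat \<nu>))
      * MacRobertE [a + 1, b + of_nat \<nu>] [d, b + 1 + of_nat \<nu>] (\<i> / z)
    = (\<Sum>j. fps_nth p \<nu> * z ^ \<nu> * (fps_nth q j * z ^ j) / (b + of_nat (\<nu> + j)))"
proof -
  have b\<nu>: "Re (b + of_nat \<nu>) > 0"
    using b by simp
  have "(1 / (\<i> / z)) ^ \<nu> * Gamma (a + c + of_nat \<nu>) / (fact \<nu> * Gamma (b + of_nat \<nu>))
      = fps_nth p \<nu> * z ^ \<nu>"
    using reciprocal_i_divide(3)[of z]
    by (simp add: p_def kummer_fps_def divide_inverse ac_simps)
      (metis mult.commute mult_minus_left power_mult_distrib)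
  moreover have "MacRobertE [a + 1, b + of_nat \<nu>] [d, b + 1 + of_nat \<nu>] (\<i> / z)
      = eval_fps (fps_euler_inv (b + of_nat \<nu>) q) z"
    using MacRobertE_eq_eval_fps_euler_inv_kummer_fps[OF a1 d b\<nu> reciprocal_i_divide(1)]
    by (simp add: q_def add_ac)
  ultimately have "(1 / (\<i> / z)) ^ \<nu> * Gamma (a + c + of_nat \<nu>) / (fact \<nu> * Gamma (b + of_nat \<nu>))
      * MacRobertE [a + 1, b + of_nat \<nu>] [d, b + 1 + of_nat \<nu>] (\<i> / z)
    = fps_nth p \<nu> * z ^ \<nu> * (\<Sum>j. fps_nth (fps_euler_inv (b + of_nat \<nu>) q) j * z ^ j)"
    by (simp only: eval_fps_def)
  also have "\<dots> = (\<Sum>j. fps_nth p \<nu> * z ^ \<nu> * (fps_nth (fps_euler_inv (b + of_nat \<nu>) q) j * z ^ j))"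
    using fps_conv_radius_euler_inv_eq_inf[OF b\<nu>, of q]
    by (intro suminf_mult[symmetric] summable_fps) (simp add: q_def fps_conv_radius_kummer_fps)
  also have "\<dots> = (\<Sum>j. fps_nth p \<nu> * z ^ \<nu> * (fps_nth q j * z ^ j) / (b + of_nat (\<nu> + j)))"
    by (simp add: fps_euler_inv_def add_ac)
  finally show ?thesis .
qed

lemma fE_eq_eval_fps_euler_inv:
  assumes b: "Re b > 0" and a1: "a + 1 \<notin> \<int>\<^sub>\<le>\<^sub>0" and d: "d \<notin> \<int>\<^sub>\<le>\<^sub>0"
  shows "fE a b c d (\<i> / z)
    = eval_fps (fps_euler_inv b (kummer_fps (a + c) b (- \<i>) * kummer_fps (a + 1) d \<i>)) z"
proof -
  define p where "p = kummer_fps (a + c) b (- \<i>)"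
  define q where "q = kummer_fps (a + 1) d \<i>"
  define x where "x i j = fps_nth p i * z ^ i * (fps_nth q j * z ^ j) / (b + of_nat (i + j))" for i j
  have diagonal: "(\<Sum>i\<le>n. x i (n - i)) = fps_nth (fps_euler_inv b (p * q)) n * z ^ n" for n
  proof -
    have "x i (n - i) = fps_nth p i * fps_nth q (n - i) / (b + of_nat n) * z ^ n" if "i \<le> n" for i
      using that by (simp add: x_def mult_ac flip: power_add)
    then have "(\<Sum>i\<le>n. x i (n - i)) = (\<Sum>i\<le>n. fps_nth p i * fps_nth q (n - i)) / (b + of_nat n) * z ^ n"
      by (simp add: sum_distrib_right sum_divide_distrib)
    then show ?thesis
      by (simp add: fps_euler_inv_def fps_mult_nth atLeast0AtMost)
  qed
  have bound: "norm (x i j) \<le> norm (fps_nth p i * z ^ i) * (norm (fps_nth q j * z ^ j) / Re b)" for i j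
  proof -
    have "norm (x i j) = norm (fps_nth p i * z ^ i) * norm (fps_nth q j * z ^ j) / norm (b + of_nat (i + j))"
      by (simp add: x_def norm_mult norm_divide)
    also have "\<dots> \<le> norm (fps_nth p i * z ^ i) * norm (fps_nth q j * z ^ j) / Re b"
      using norm_add_of_nat_ge_Re[of b "i + j"] b
      by (intro divide_left_mono mult_pos_pos mult_nonneg_nonneg norm_ge_zero) linarith+
    finally show ?thesis
      by simp
  qed
  have "fE a b c d (\<i> / z) = (\<Sum>\<nu>. \<Sum>j. x \<nu> j)"
    unfolding fE_def x_def p_def q_def fE_summand_eq_suminf[OF assms] ..
  also have "\<dots> = (\<Sum>n. \<Sum>i\<le>n. x i (n - i))"
    using b by (intro suminf_suminf_eq_suminf_diagonal[OF bound] summable_divide norm_summable_fps)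
      (simp_all add: p_def q_def fps_conv_radius_kummer_fps)
  also have "\<dots> = eval_fps (fps_euler_inv b (p * q)) z"
    unfolding eval_fps_def diagonal ..
  finally show ?thesis
    by (simp add: p_def q_def)
qed

lemma has_vector_derivative_eval_fps_of_real:
  assumes "fps_conv_radius f = \<infinity>"
  shows "((\<lambda>t. eval_fps f (complex_of_real t)) has_vector_derivative
           eval_fps (fps_deriv f) (complex_of_real t)) (at t)"
  by (rule has_vector_derivative_real_field) (simp add: has_field_derivative_eval_fps assms)

definition powr_fps_primitive :: "complex \<Rightarrow> complex fps \<Rightarrow> real \<Rightarrow> complex" where
  "powr_fps_primitive s f t = complex_of_real t powr s * eval_fps (fps_euler_inv s f) (complex_of_real t)"

lemma has_vector_derivative_powr_fps_primitive:
  assumes "Re s > 0" "fps_conv_radius f = \<infinity>" "t \<noteq> 0"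
  shows "(powr_fps_primitive s f has_vector_derivative
           complex_of_real t powr (s - 1) * eval_fps f (complex_of_real t)) (at t)"
proof -
  define g where "g = fps_euler_inv s f"
  define z where "z = complex_of_real t"
  have g: "fps_conv_radius g = \<infinity>"
    unfolding g_def using fps_conv_radius_euler_inv_eq_inf assms(1,2) .
  from has_vector_derivative_eval_fps_of_real[OF g, of t]
  have "(powr_fps_primitive s f has_vector_derivative
      z powr s * eval_fps (fps_deriv g) z + s * z powr (s - 1) * eval_fps g z) (at t)"
    unfolding powr_fps_primitive_def g_def[symmetric] z_def
    by (intro has_vector_derivative_mult has_vector_derivative_of_real_powr assms(3))
  also have "z powr s * eval_fps (fps_deriv g) z + s * z powr (s - 1) * eval_fps g z
      = z powr (s - 1) * eval_fps (fps_euler s g) z"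
    using assms(3) g by (simp add: z_def eval_fps_euler powr_diff algebra_simps)
  also have "fps_euler s g = f"
    unfolding g_def using assms(1) by (intro fps_euler_euler_inv) (auto simp: complex_eq_iff)
  finally show ?thesis
    by (simp add: z_def)
qed

lemma isCont_powr_fps_primitive_0:
  assumes "Re s > 0" "fps_conv_radius f = \<infinity>"
  shows "isCont (powr_fps_primitive s f) 0"
proof -
  have "((\<lambda>t. complex_of_real t powr s) \<longlongrightarrow> 0 powr s) (at 0)"
    using assms(1) by (auto intro!: tendsto_eq_intros)
  moreover have "isCont (\<lambda>t. eval_fps (fps_euler_inv s f) (complex_of_real t)) 0"
    using has_vector_derivative_eval_fps_of_real[OF fps_conv_radius_euler_inv_eq_inf[OF assms]]
    by (rule has_vector_derivative_continuous)
  ultimately have "(powr_fps_primitive s f \<longlongrightarrow> 0 powr s * eval_fps (fps_euler_inv s f) 0) (at 0)"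
    unfolding powr_fps_primitive_def isCont_def by (intro tendsto_mult) simp_all
  then show ?thesis
    by (simp add: isCont_def powr_fps_primitive_def)
qed

lemma has_ointegral_powr_fps_primitive:
  assumes "Re r > -1" "fps_conv_radius f = \<infinity>"
  shows "has_ointegral (\<lambda>t. complex_of_real t powr r * eval_fps f (complex_of_real t))
           (powr_fps_primitive (r + 1) f \<rho>) 0 \<rho>"
proof -
  have "Re (r + 1) > 0"
    using assms(1) by simp
  from has_ointegral_fundamental[OF isCont_powr_fps_primitive_0[OF this assms(2)]
      has_vector_derivative_powr_fps_primitive[OF this assms(2)], where a = 0 and b = \<rho>]
  show ?thesis
    by (simp add: powr_fps_primitive_def)
qed

lemma has_ointegral_powr_kummer_fps_contiguous:
  fixes A :: "complex fps"
  assumes b: "Re b > -1" "b \<notin> \<int>\<^sub>\<le>\<^sub>0" and A: "fps_conv_radius A = \<infinity>"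
  shows "has_ointegral
           (\<lambda>t. complex_of_real t powr b
                 * (eval_fps A (complex_of_real t) * eval_fps (kummer_fps a b u) (complex_of_real t)))
           (b * powr_fps_primitive (b + 1) (kummer_fps a (b + 1) u * A) \<rho>
            + u * powr_fps_primitive (b + 2) (kummer_fps (a + 1) (b + 2) u * A) \<rho>) 0 \<rho>"
proof -
  define P where "P = kummer_fps a (b + 1) u"
  define P' where "P' = kummer_fps (a + 1) (b + 2) u"
  have radius: "fps_conv_radius (P * A) = \<infinity>" "fps_conv_radius (P' * A) = \<infinity>"
    using fps_conv_radius_mult[of P A] fps_conv_radius_mult[of P' A] A
    by (simp_all add: P_def P'_def fps_conv_radius_kummer_fps)
  have "Re (b + 1) > -1"
    using b(1) by simp
  with b(1) radius have "has_ointegral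
      (\<lambda>t. b * (complex_of_real t powr b * eval_fps (P * A) (complex_of_real t))
         + u * (complex_of_real t powr (b + 1) * eval_fps (P' * A) (complex_of_real t)))
      (b * powr_fps_primitive (b + 1) (P * A) \<rho> + u * powr_fps_primitive (b + 1 + 1) (P' * A) \<rho>) 0 \<rho>"
    by (intro has_ointegral_add has_ointegral_mult_right has_ointegral_powr_fps_primitive)
  moreover have "b * (z powr b * eval_fps (P * A) z) + u * (z powr (b + 1) * eval_fps (P' * A) z)
      = z powr b * (eval_fps A z * eval_fps (kummer_fps a b u) z)" for z
    unfolding eval_kummer_fps_contiguous[OF b(2)] powr_add_one
    by (simp add: P_def P'_def eval_fps_mult fps_conv_radius_kummer_fps A algebra_simps)
  ultimately show ?thesis
    by (simp only: P_def P'_def add.assoc one_add_one)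
qed

lemma has_ointegral_powr_kummer_fps_by_parts:
  assumes b: "Re b > -1" "b \<notin> \<int>\<^sub>\<le>\<^sub>0"
  shows "has_ointegral
           (\<lambda>t. complex_of_real t powr b * (eval_fps (kummer_fps a' b' v) (complex_of_real t)
                 * eval_fps (kummer_fps a b u) (complex_of_real t)))
           (eval_fps (kummer_fps a' b' v) (complex_of_real \<rho>) * powr_fps_primitive (b + 1) (kummer_fps a b u) \<rho>
            - v * b * powr_fps_primitive (b + 2) (kummer_fps a (b + 2) u * kummer_fps (a' + 1) (b' + 1) v) \<rho>
            - v * u * powr_fps_primitive (b + 3) (kummer_fps (a + 1) (b + 3) u * kummer_fps (a' + 1) (b' + 1) v) \<rho>)
           0 \<rho>"
proof -
  define A where "A = kummer_fps a' b' v"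
  define Q where "Q = kummer_fps (a' + 1) (b' + 1) v"
  define B where "B = kummer_fps a b u"
  define P where "P = kummer_fps a (b + 2) u"
  define P' where "P' = kummer_fps (a + 1) (b + 3) u"
  have Re: "Re (b + 1) > 0" "Re (b + 1) > -1" "Re (b + 1 + 1) > -1"
    using b(1) by simp_all
  have radius: "fps_conv_radius A = \<infinity>" "fps_conv_radius B = \<infinity>"
    "fps_conv_radius (P * Q) = \<infinity>" "fps_conv_radius (P' * Q) = \<infinity>"
    using fps_conv_radius_mult[of P Q] fps_conv_radius_mult[of P' Q]
    by (simp_all add: A_def B_def P_def P'_def Q_def fps_conv_radius_kummer_fps)
  have "v * b * (z powr (b + 1) * eval_fps (P * Q) z) + v * u * (z powr (b + 1 + 1) * eval_fps (P' * Q) z)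
      = eval_fps (fps_deriv A) z * (z powr (b + 1) * eval_fps (fps_euler_inv (b + 1) B) z)" for z
    unfolding A_def B_def fps_deriv_kummer_fps eval_fps_euler_inv_kummer_fps[OF b(2)] powr_add_one[of z "b + 1"]
    by (simp add: P_def P'_def Q_def eval_fps_mult fps_conv_radius_kummer_fps algebra_simps)
  moreover have "has_ointegral
      (\<lambda>t. v * b * (complex_of_real t powr (b + 1) * eval_fps (P * Q) (complex_of_real t))
         + v * u * (complex_of_real t powr (b + 1 + 1) * eval_fps (P' * Q) (complex_of_real t)))
      (v * b * powr_fps_primitive (b + 1 + 1) (P * Q) \<rho> + v * u * powr_fps_primitive (b + 1 + 1 + 1) (P' * Q) \<rho>)
      0 \<rho>"
    using Re radius by (intro has_ointegral_add has_ointegral_mult_right has_ointegral_powr_fps_primitive)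
  ultimately have "has_ointegral (\<lambda>t. eval_fps (fps_deriv A) (complex_of_real t) * powr_fps_primitive (b + 1) B t)
      (v * b * powr_fps_primitive (b + 1 + 1) (P * Q) \<rho> + v * u * powr_fps_primitive (b + 1 + 1 + 1) (P' * Q) \<rho>)
      0 \<rho>"
    unfolding powr_fps_primitive_def by simp
  from has_ointegral_by_parts[OF
      has_vector_derivative_continuous[OF has_vector_derivative_eval_fps_of_real[OF radius(1)]]
      isCont_powr_fps_primitive_0[OF Re(1) radius(2)] has_vector_derivative_eval_fps_of_real[OF radius(1)]
      has_vector_derivative_powr_fps_primitive[OF Re(1) radius(2)] this]
  show ?thesis
    by (simp add: A_def B_def P_def P'_def Q_def powr_fps_primitive_def algebra_simps)
qed

lemma has_ointegral_MacRobertE_product_contiguous: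
  fixes \<alpha> \<beta> \<gamma> :: complex and \<rho> :: real
  assumes \<beta>: "Re \<beta> > -1" "\<beta> \<notin> \<int>\<^sub>\<le>\<^sub>0" and \<alpha>: "\<alpha> \<notin> \<int>\<^sub>\<le>\<^sub>0" "\<alpha> + \<gamma> \<notin> \<int>\<^sub>\<le>\<^sub>0"
  shows "has_ointegral
           (\<lambda>t. complex_of_real t powr \<beta> * MacRobertE [\<alpha>] [\<beta>] (\<i> / complex_of_real t)
                 * MacRobertE [\<alpha> + \<gamma>] [\<beta>] (- \<i> / complex_of_real t))
           (complex_of_real \<rho> powr (\<beta> + 1)
              * (\<beta> * fE (\<alpha> - 1) (\<beta> + 1) (\<gamma> + 1) \<beta> (\<i> / complex_of_real \<rho>)
                 - \<i> * complex_of_real \<rho> * fE (\<alpha> - 1) (\<beta> + 2) (\<gamma> + 2) \<beta> (\<i> / complex_of_real \<rho>)))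
           0 \<rho>"
proof -
  define A where "A = kummer_fps \<alpha> \<beta> \<i>"
  have Re: "Re (\<beta> + 1) > 0" "Re (\<beta> + 2) > 0"
    using \<beta>(1) by simp_all
  have "\<alpha> - 1 + (\<gamma> + 1) = \<alpha> + \<gamma>" "\<alpha> - 1 + (\<gamma> + 2) = \<alpha> + \<gamma> + 1" "\<alpha> - 1 + 1 = \<alpha>"
    by simp_all
  then have fE: "fE (\<alpha> - 1) (\<beta> + 1) (\<gamma> + 1) \<beta> (\<i> / z)
      = eval_fps (fps_euler_inv (\<beta> + 1) (kummer_fps (\<alpha> + \<gamma>) (\<beta> + 1) (- \<i>) * A)) z"
    "fE (\<alpha> - 1) (\<beta> + 2) (\<gamma> + 2) \<beta> (\<i> / z)
      = eval_fps (fps_euler_inv (\<beta> + 2) (kummer_fps (\<alpha> + \<gamma> + 1) (\<beta> + 2) (- \<i>) * A)) z" for z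
    using fE_eq_eval_fps_euler_inv[OF Re(1), of "\<alpha> - 1" \<beta> "\<gamma> + 1" z]
      fE_eq_eval_fps_euler_inv[OF Re(2), of "\<alpha> - 1" \<beta> "\<gamma> + 2" z] \<alpha>(1) \<beta>(2)
    by (simp_all only: A_def) simp_all
  have "(\<lambda>t. complex_of_real t powr \<beta> * (eval_fps A (complex_of_real t)
      * eval_fps (kummer_fps (\<alpha> + \<gamma>) \<beta> (- \<i>)) (complex_of_real t)))
      = (\<lambda>t. complex_of_real t powr \<beta> * MacRobertE [\<alpha>] [\<beta>] (\<i> / complex_of_real t)
          * MacRobertE [\<alpha> + \<gamma>] [\<beta>] (- \<i> / complex_of_real t))"
    unfolding A_def mult.assoc MacRobertE_product_eq_eval_fps[OF \<alpha>(1) \<beta>(2) \<alpha>(2)] ..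
  with has_ointegral_powr_kummer_fps_contiguous[OF \<beta>, where a = "\<alpha> + \<gamma>" and u = "- \<i>" and A = A]
  show ?thesis
    unfolding fE powr_fps_primitive_def powr_add_one[of _ "\<beta> + 1", unfolded add.assoc one_add_one]
    by (simp add: A_def fps_conv_radius_kummer_fps algebra_simps)
qed

lemma has_ointegral_MacRobertE_product_by_parts:
  fixes \<alpha> \<beta> \<gamma> :: complex and \<rho> :: real
  assumes \<beta>: "Re \<beta> > -1" "\<beta> \<notin> \<int>\<^sub>\<le>\<^sub>0" and \<alpha>: "\<alpha> \<notin> \<int>\<^sub>\<le>\<^sub>0" "\<alpha> + \<gamma> \<notin> \<int>\<^sub>\<le>\<^sub>0"
  shows "has_ointegral
           (\<lambda>t. complex_of_real t powr \<beta> * MacRobertE [\<alpha>] [\<beta>] (\<i> / complex_of_real t)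
                 * MacRobertE [\<alpha> + \<gamma>] [\<beta>] (- \<i> / complex_of_real t))
           (complex_of_real \<rho> powr (\<beta> + 1) * MacRobertE [\<alpha>] [\<beta>] (\<i> / complex_of_real \<rho>)
              * MacRobertE [\<alpha> + \<gamma>, \<beta> + 1] [\<beta>, \<beta> + 2] (- \<i> / complex_of_real \<rho>)
            - \<i> * complex_of_real \<rho> powr (\<beta> + 2) * \<beta>
              * fE \<alpha> (\<beta> + 2) \<gamma> (\<beta> + 1) (\<i> / complex_of_real \<rho>)
            - complex_of_real \<rho> powr (\<beta> + 3)
              * fE \<alpha> (\<beta> + 3) (\<gamma> + 1) (\<beta> + 1) (\<i> / complex_of_real \<rho>))
           0 \<rho>"
proof -
  have Re: "Re (\<beta> + 1) > 0" "Re (\<beta> + 2) > 0" "Re (\<beta> + 3) > 0"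
    using \<beta>(1) by simp_all
  have \<alpha>1: "\<alpha> + 1 \<notin> \<int>\<^sub>\<le>\<^sub>0" and \<beta>1: "\<beta> + 1 \<notin> \<int>\<^sub>\<le>\<^sub>0"
    using add_of_nat_notin_nonpos_Ints[OF \<alpha>(1), of 1] add_of_nat_notin_nonpos_Ints[OF \<beta>(2), of 1] by simp_all
  have evaluations: "MacRobertE [\<alpha>] [\<beta>] (\<i> / z) = eval_fps (kummer_fps \<alpha> \<beta> \<i>) z"
    "MacRobertE [\<alpha> + \<gamma>, \<beta> + 1] [\<beta>, \<beta> + 2] (- \<i> / z)
      = eval_fps (fps_euler_inv (\<beta> + 1) (kummer_fps (\<alpha> + \<gamma>) \<beta> (- \<i>))) z"
    "fE \<alpha> (\<beta> + 2) \<gamma> (\<beta> + 1) (\<i> / z)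
      = eval_fps (fps_euler_inv (\<beta> + 2) (kummer_fps (\<alpha> + \<gamma>) (\<beta> + 2) (- \<i>) * kummer_fps (\<alpha> + 1) (\<beta> + 1) \<i>)) z"
    "fE \<alpha> (\<beta> + 3) (\<gamma> + 1) (\<beta> + 1) (\<i> / z)
      = eval_fps (fps_euler_inv (\<beta> + 3) (kummer_fps (\<alpha> + \<gamma> + 1) (\<beta> + 3) (- \<i>) * kummer_fps (\<alpha> + 1) (\<beta> + 1) \<i>)) z"
    for z
    by (fact MacRobertE_eq_eval_kummer_fps[OF \<alpha>(1) \<beta>(2) reciprocal_i_divide(1)]
        MacRobertE_eq_eval_fps_euler_inv_kummer_fps[OF \<alpha>(2) \<beta>(2) Re(1) reciprocal_i_divide(2),
          unfolded add.assoc one_add_one]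
        fE_eq_eval_fps_euler_inv[OF Re(2) \<alpha>1 \<beta>1]
        fE_eq_eval_fps_euler_inv[OF Re(3) \<alpha>1 \<beta>1, of "\<gamma> + 1", unfolded add.assoc[symmetric]])+
  have "(\<lambda>t. complex_of_real t powr \<beta> * (eval_fps (kummer_fps \<alpha> \<beta> \<i>) (complex_of_real t)
      * eval_fps (kummer_fps (\<alpha> + \<gamma>) \<beta> (- \<i>)) (complex_of_real t)))
      = (\<lambda>t. complex_of_real t powr \<beta> * MacRobertE [\<alpha>] [\<beta>] (\<i> / complex_of_real t)
          * MacRobertE [\<alpha> + \<gamma>] [\<beta>] (- \<i> / complex_of_real t))"
    unfolding mult.assoc MacRobertE_product_eq_eval_fps[OF \<alpha>(1) \<beta>(2) \<alpha>(2)] ..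
  with has_ointegral_powr_kummer_fps_by_parts[OF \<beta>, where a' = \<alpha> and b' = \<beta> and v = \<i>
      and a = "\<alpha> + \<gamma>" and u = "- \<i>"]
  show ?thesis
    unfolding evaluations powr_fps_primitive_def by (simp add: algebra_simps)
qed

theorem mainTheorem9:
  fixes \<alpha> \<beta> \<gamma> :: complex and \<rho> :: real
  assumes "Re \<beta> > -1"
    and "\<beta> \<notin> \<int>\<^sub>\<le>\<^sub>0"
    and "\<alpha> \<notin> \<int>\<^sub>\<le>\<^sub>0"
    and "\<alpha> + \<gamma> \<notin> \<int>\<^sub>\<le>\<^sub>0"
    and "\<rho> \<noteq> 0"
  shows "has_ointegral
           (\<lambda>t. complex_of_real t powr \<beta> * MacRobertE [\<alpha>] [\<beta>] (\<i> / complex_of_real t)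
                 * MacRobertE [\<alpha> + \<gamma>] [\<beta>] (- \<i> / complex_of_real t))
           (complex_of_real \<rho> powr (\<beta> + 1) * MacRobertE [\<alpha>] [\<beta>] (\<i> / complex_of_real \<rho>)
              * MacRobertE [\<alpha> + \<gamma>, \<beta> + 1] [\<beta>, \<beta> + 2] (- \<i> / complex_of_real \<rho>)
            - \<i> * complex_of_real \<rho> powr (\<beta> + 2) * \<beta>
              * fE \<alpha> (\<beta> + 2) \<gamma> (\<beta> + 1) (\<i> / complex_of_real \<rho>)
            - complex_of_real \<rho> powr (\<beta> + 3)
              * fE \<alpha> (\<beta> + 3) (\<gamma> + 1) (\<beta> + 1) (\<i> / complex_of_real \<rho>))
           0 \<rho>
       \<and> has_ointegral
           (\<lambda>t. complex_of_real t powr \<beta> * MacRobertE [\<alpha>] [\<beta>] (\<i> / complex_of_real t)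
                 * MacRobertE [\<alpha> + \<gamma>] [\<beta>] (- \<i> / complex_of_real t))
           (complex_of_real \<rho> powr (\<beta> + 1)
              * (\<beta> * fE (\<alpha> - 1) (\<beta> + 1) (\<gamma> + 1) \<beta> (\<i> / complex_of_real \<rho>)
                 - \<i> * complex_of_real \<rho> * fE (\<alpha> - 1) (\<beta> + 2) (\<gamma> + 2) \<beta> (\<i> / complex_of_real \<rho>)))
           0 \<rho>"
  using has_ointegral_MacRobertE_product_by_parts[OF assms(1-4)]
    has_ointegral_MacRobertE_product_contiguous[OF assms(1-4)]
  by blast

end
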